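(* Let $X$ be a finite set and let $c$ be a choice correspondence on $X$ satisfying: (Condition 1) for all $x,y\in X$ and menus $A\subset B$, if $x,y\in A$, $x\in c(A)$ and $y\in c(B)$, then $x\in c(B)$; and (Condition 3) for every menu $A$ with at least two elements there exists $x\in A$ with $x\notin c(A)$. Then $c$ satisfies No Binary Cycles: for all $x,y,z\in X$, if $x\in c(\{x,y\})$ and $y\in c(\{y,z\})$, then $x\in c(\{x,z\})$.
   Context: A menu is a nonempty subset of $X$. A choice correspondence is a map $c$ assigning to each menu $A$ a nonempty subset $c(A)\subseteq A$. *)

theory Defs
  imports Main
begin

definition menu :: "'a set \<Rightarrow> 'a set \<Rightarrow> bool" where
  "menu X A \<longleftrightarrow> A \<noteq> {} \<and> A \<subseteq> X"

definition choice_correspondence :: "'a set \<Rightarrow> ('a set \<Rightarrow> 'a set) \<Rightarrow> bool" where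
  "choice_correspondence X c \<longleftrightarrow> (\<forall>A. menu X A \<longrightarrow> c A \<noteq> {} \<and> c A \<subseteq> A)"

end

theory Submission
  imports Defs
begin

text \<open>Suppose x \<in> c {x, y} and y \<in> c {y, z} but x \<notin> c {x, z}. Then x, y, z are distinct and
  z \<in> c {x, z}. Condition 1, applied to the three pairs inside T = {x, y, z}, makes c T closed
  under y \<mapsto> x, z \<mapsto> y and x \<mapsto> z; being nonempty, c T is all of T, contradicting
  Condition 3.\<close>

lemma menu_insert [simp]: "menu X (insert x A) \<longleftrightarrow> x \<in> X \<and> A \<subseteq> X"
  by (auto simp: menu_def)

lemma choice_cyclic_triple:
  fixes X :: "'a set" and c :: "'a set \<Rightarrow> 'a set"
  assumes cc: "choice_correspondence X c"
    and cond1: "\<And>x y A B. \<lbrakk> x \<in> X; y \<in> X; menu X A; menu X B; A \<subset> B;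
                  x \<in> A; y \<in> A; x \<in> c A; y \<in> c B \<rbrakk> \<Longrightarrow> x \<in> c B"
    and X: "x \<in> X" "y \<in> X" "z \<in> X"
    and distinct: "x \<noteq> y" "y \<noteq> z" "x \<noteq> z"
    and xy: "x \<in> c {x, y}" and yz: "y \<in> c {y, z}" and zx: "z \<in> c {x, z}"
  shows "c {x, y, z} = {x, y, z}"
proof -
  let ?T = "{x, y, z}"
  have menu_T: "menu X ?T" using X by simp
  have pairs_in_T: "{x, y} \<subset> ?T" "{y, z} \<subset> ?T" "{x, z} \<subset> ?T"
    using distinct by auto
  have y_to_x: "x \<in> c ?T" if "y \<in> c ?T"
    using cond1[of x y "{x, y}" ?T] X pairs_in_T xy that by auto
  have z_to_y: "y \<in> c ?T" if "z \<in> c ?T"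
    using cond1[of y z "{y, z}" ?T] X pairs_in_T yz that by auto
  have x_to_z: "z \<in> c ?T" if "x \<in> c ?T"
    using cond1[of z x "{x, z}" ?T] X pairs_in_T zx that by auto
  from cc menu_T have "c ?T \<noteq> {}" and "c ?T \<subseteq> ?T"
    unfolding choice_correspondence_def by blast+
  then show ?thesis using y_to_x z_to_y x_to_z by blast
qed

theorem lemma4:
  fixes X :: "'a set" and c :: "'a set \<Rightarrow> 'a set"
  assumes fin: "finite X"
    and cc: "choice_correspondence X c"
    and cond1: "\<And>x y A B. \<lbrakk> x \<in> X; y \<in> X; menu X A; menu X B; A \<subset> B;
                  x \<in> A; y \<in> A; x \<in> c A; y \<in> c B \<rbrakk> \<Longrightarrow> x \<in> c B"
    and cond3: "\<And>A. \<lbrakk> menu X A; card A \<ge> 2 \<rbrakk> \<Longrightarrow> \<exists>x\<in>A. x \<notin> c A"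
  shows "\<forall>x\<in>X. \<forall>y\<in>X. \<forall>z\<in>X.
           x \<in> c {x, y} \<and> y \<in> c {y, z} \<longrightarrow> x \<in> c {x, z}"
proof (intro ballI impI; elim conjE)
  fix x y z
  assume X: "x \<in> X" "y \<in> X" "z \<in> X" and xy: "x \<in> c {x, y}" and yz: "y \<in> c {y, z}"
  show "x \<in> c {x, z}"
  proof (rule ccontr)
    assume x_not: "x \<notin> c {x, z}"
    from cc X have "c {x, z} \<noteq> {}" "c {x, z} \<subseteq> {x, z}"
      unfolding choice_correspondence_def by auto
    with x_not have zx: "z \<in> c {x, z}" by blast
    have distinct: "x \<noteq> y" "y \<noteq> z" "x \<noteq> z" using xy yz zx x_not by auto
    have "c {x, y, z} = {x, y, z}"
      using choice_cyclic_triple[OF cc cond1 X distinct xy yz zx] .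
    moreover have "card {x, y, z} \<ge> 2" using distinct by simp
    ultimately show False using cond3[of "{x, y, z}"] X by auto
  qed
qed

end
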